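(* Let $\lambda,\mu\in\mathbb{C}$ and let $L=\widetilde{L_{\lambda,\mu}}^1$; for $j\in\mathbb{Z}$ let $\Delta_{j+\frac12}(L)$ be the space of $\frac12$-derivations of $L$ of degree $j+\frac12$. (1) If $\mu\in\frac12+\mathbb{Z}$ and $\lambda\notin\{-3,-1,1\}$, then $\Delta_{j+\frac12}(L)=0$ for all $j\in\mathbb{Z}$. (2) If $\mu\notin\frac12\mathbb{Z}$, or $\mu\in\mathbb{Z}$ and $\lambda\neq-1$, then $\Delta_{j+\frac12}(L)=0$ for $\lambda\neq1$, while for $\lambda=1$, $\Delta_{j+\frac12}(\widetilde{L_{1,\mu}}^1)$ consists exactly of the maps $\varphi$ for which there is $\alpha\in\mathbb{C}$ with $\varphi(L_n)=\alpha Y_{n+j+\frac12}$ and $\varphi(Y_{n+\frac12})=\alpha M_{n+j+1}$ for all $n\in\mathbb{Z}$, and $\varphi(M_n)=0$, $\varphi(C_L)=0$.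
   Context: For $\lambda,\mu\in\mathbb{C}$, $\widetilde{L_{\lambda,\mu}}^1$ is the complex Lie algebra with basis $\{L_n,M_n,Y_{n+\frac12},C_L\mid n\in\mathbb{Z}\}$, $C_L$ central, and nonzero brackets $[L_m,L_n]=(n-m)L_{m+n}+\frac{m^3-m}{12}\delta_{m+n,0}C_L$, $[L_m,M_n]=(n-\lambda m+2\mu)M_{m+n}$, $[L_m,Y_{n+\frac12}]=(n+\frac12-\frac{\lambda+1}{2}m+\mu)Y_{m+n+\frac12}$, $[Y_{m+\frac12},Y_{n+\frac12}]=(n-m)M_{m+n+1}$. It is $\frac12\mathbb{Z}$-graded by $W_0=\langle L_0,M_0,C_L\rangle$, $W_n=\langle L_n,M_n\rangle$ ($n\neq0$), $W_{n+\frac12}=\langle Y_{n+\frac12}\rangle$. A $\frac12$-derivation is a linear map $\varphi$ with $\varphi([x,y])=\frac12([\varphi(x),y]+[x,\varphi(y)])$; it has degree $g$ if $\varphi(W_h)\subseteq W_{g+h}$ for all $h\in\frac12\mathbb{Z}$. *)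

theory Defs
  imports Complex_Main
begin

text \<open>Basis of the Lie algebra: GL n = L_n, GM n = M_n, GY n = Y_{n+1/2}, GC = C_L.\<close>
datatype gen = GL int | GM int | GY int | GC

type_synonym vec = "gen \<Rightarrow> complex"

definition supp :: "vec \<Rightarrow> gen set" where
  "supp v = {g. v g \<noteq> 0}"

definition Vsp :: "vec set" where
  "Vsp = {v. finite (supp v)}"

definition vzero :: vec where "vzero = (\<lambda>_. 0)"
definition vadd :: "vec \<Rightarrow> vec \<Rightarrow> vec" where "vadd x y = (\<lambda>g. x g + y g)"
definition vsmul :: "complex \<Rightarrow> vec \<Rightarrow> vec" where "vsmul c x = (\<lambda>g. c * x g)"
definition e :: "gen \<Rightarrow> vec" where "e g = (\<lambda>h. if h = g then 1 else 0)"

fun brb :: "complex \<Rightarrow> complex \<Rightarrow> gen \<Rightarrow> gen \<Rightarrow> vec" where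
  "brb la mu (GL m) (GL n) =
     vadd (vsmul (of_int (n - m)) (e (GL (m + n))))
          (vsmul (if m + n = 0 then (of_int m ^ 3 - of_int m) / 12 else 0) (e GC))"
| "brb la mu (GL m) (GM n) = vsmul (of_int n - la * of_int m + 2 * mu) (e (GM (m + n)))"
| "brb la mu (GM n) (GL m) = vsmul (- (of_int n - la * of_int m + 2 * mu)) (e (GM (m + n)))"
| "brb la mu (GL m) (GY n) =
     vsmul (of_int n + 1/2 - (la + 1) / 2 * of_int m + mu) (e (GY (m + n)))"
| "brb la mu (GY n) (GL m) =
     vsmul (- (of_int n + 1/2 - (la + 1) / 2 * of_int m + mu)) (e (GY (m + n)))"
| "brb la mu (GY m) (GY n) = vsmul (of_int (n - m)) (e (GM (m + n + 1)))"
| "brb la mu _ _ = vzero"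

definition br :: "complex \<Rightarrow> complex \<Rightarrow> vec \<Rightarrow> vec \<Rightarrow> vec" where
  "br la mu x y = (\<lambda>g. \<Sum>a\<in>supp x. \<Sum>b\<in>supp y. x a * y b * brb la mu a b g)"

text \<open>Doubled degree: the basis element has degree \<open>gdeg g / 2\<close> in the 1/2 Z grading.\<close>
fun gdeg :: "gen \<Rightarrow> int" where
  "gdeg (GL n) = 2 * n"
| "gdeg (GM n) = 2 * n"
| "gdeg (GY n) = 2 * n + 1"
| "gdeg GC = 0"

definition Wc :: "int \<Rightarrow> vec set" where
  "Wc k = {v \<in> Vsp. \<forall>g \<in> supp v. gdeg g = k}"

definition is_linear :: "(vec \<Rightarrow> vec) \<Rightarrow> bool" where
  "is_linear \<phi> \<longleftrightarrow> (\<forall>v\<in>Vsp. \<phi> v \<in> Vsp)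
     \<and> (\<forall>x\<in>Vsp. \<forall>y\<in>Vsp. \<phi> (vadd x y) = vadd (\<phi> x) (\<phi> y))
     \<and> (\<forall>c. \<forall>x\<in>Vsp. \<phi> (vsmul c x) = vsmul c (\<phi> x))"

definition is_half_der :: "complex \<Rightarrow> complex \<Rightarrow> (vec \<Rightarrow> vec) \<Rightarrow> bool" where
  "is_half_der la mu \<phi> \<longleftrightarrow> is_linear \<phi> \<and>
     (\<forall>x\<in>Vsp. \<forall>y\<in>Vsp. \<phi> (br la mu x y) =
        vsmul (1/2) (vadd (br la mu (\<phi> x) y) (br la mu x (\<phi> y))))"

text \<open>Degree \<open>d/2\<close> (d doubled degree).\<close>
definition has_deg2 :: "int \<Rightarrow> (vec \<Rightarrow> vec) \<Rightarrow> bool" where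
  "has_deg2 d \<phi> \<longleftrightarrow> (\<forall>k. \<forall>v\<in>Wc k. \<phi> v \<in> Wc (k + d))"

definition Delta2 :: "complex \<Rightarrow> complex \<Rightarrow> int \<Rightarrow> (vec \<Rightarrow> vec) set" where
  "Delta2 la mu d = {\<phi>. is_half_der la mu \<phi> \<and> has_deg2 d \<phi>}"

end

(* By the grading, a half-derivation phi of degree j + 1/2 sends L_n, M_n and C_L to multiples of
   Y_{n+j+1/2}, Y_{n+j+1/2} and Y_{j+1/2}, and Y_{n+1/2} into the span of L_{n+j+1}, M_{n+j+1} and C_L.
   The identity 2 phi [x, y] = [phi x, y] + [x, phi y] on pairs of basis vectors is a system of linear
   relations among these coefficients.  The pair (C_L, Y) kills phi(C_L), the pairs (L_m, Y) with
   m = 0, 1, 2 kill the L-components of phi(Y), and then (M_m, Y) kills phi(M_m).  The C_L-components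
   of phi(Y) survive (L_0, Y) and (L_1, Y) only for lambda = -3, mu in 1/2 + Z.  The M-components of
   (L_m, Y) force all remaining coefficients to equal one constant alpha, and (L_0, L_1) gives
   alpha (1 - lambda) = 0.  Conversely, for lambda = 1 these maps satisfy the identity on basis pairs,
   hence everywhere by bilinearity. *)

theory Submission
  imports Defs
begin

lemma e_apply: "e g h = (if h = g then 1 else 0)"
  by (simp add: e_def)

lemma vadd_apply: "vadd x y g = x g + y g"
  by (simp add: vadd_def)

lemma vsmul_apply: "vsmul c x g = c * x g"
  by (simp add: vsmul_def)

lemma vzero_apply: "vzero g = 0"
  by (simp add: vzero_def)

lemmas vec_apply = e_apply vadd_apply vsmul_apply vzero_apply

lemma supp_e [simp]: "supp (e g) = {g}"
  by (auto simp: supp_def vec_apply)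

lemma finite_supp: "x \<in> Vsp \<Longrightarrow> finite (supp x)"
  by (simp add: Vsp_def)

lemma e_in_Vsp [simp]: "e g \<in> Vsp"
  by (simp add: Vsp_def)

lemma vzero_in_Vsp [simp]: "vzero \<in> Vsp"
  by (simp add: Vsp_def supp_def vzero_def)

lemma supp_vadd: "supp (vadd x y) \<subseteq> supp x \<union> supp y"
  by (auto simp: supp_def vec_apply)

lemma supp_vsmul: "supp (vsmul c x) \<subseteq> supp x"
  by (auto simp: supp_def vec_apply)

lemma vadd_in_Vsp [simp]: "x \<in> Vsp \<Longrightarrow> y \<in> Vsp \<Longrightarrow> vadd x y \<in> Vsp"
  using supp_vadd by (auto simp: Vsp_def intro: finite_subset)

lemma vsmul_in_Vsp [simp]: "x \<in> Vsp \<Longrightarrow> vsmul c x \<in> Vsp"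
  using supp_vsmul by (auto simp: Vsp_def intro: finite_subset)

definition vsum :: "('a \<Rightarrow> vec) \<Rightarrow> 'a set \<Rightarrow> vec" where
  "vsum f S = (\<lambda>g. \<Sum>s\<in>S. f s g)"

lemma vsum_apply: "vsum f S g = (\<Sum>s\<in>S. f s g)"
  by (simp add: vsum_def)

lemma vsum_empty [simp]: "vsum f {} = vzero"
  by (simp add: vsum_def vzero_def)

lemma vsum_insert [simp]:
  "finite S \<Longrightarrow> s \<notin> S \<Longrightarrow> vsum f (insert s S) = vadd (f s) (vsum f S)"
  by (simp add: vsum_def vadd_def)

lemma vsum_in_Vsp [simp]: "finite S \<Longrightarrow> (\<And>s. s \<in> S \<Longrightarrow> f s \<in> Vsp) \<Longrightarrow> vsum f S \<in> Vsp"
  by (induction S rule: finite_induct) simp_all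

lemma vsum_basis: "v \<in> Vsp \<Longrightarrow> v = vsum (\<lambda>g. vsmul (v g) (e g)) (supp v)"
  by (rule ext) (auto simp: Vsp_def supp_def vec_apply vsum_apply if_distrib cong: if_cong)

lemma brb_in_Vsp [simp]: "brb la mu a b \<in> Vsp"
  by (cases "(la, mu, a, b)" rule: brb.cases) simp_all

lemma br_eq_sum_superset:
  assumes "finite A" "supp x \<subseteq> A" "finite B" "supp y \<subseteq> B"
  shows "br la mu x y g = (\<Sum>a\<in>A. \<Sum>b\<in>B. x a * y b * brb la mu a b g)"
proof -
  have "br la mu x y g = (\<Sum>a\<in>supp x. \<Sum>b\<in>B. x a * y b * brb la mu a b g)"
    unfolding br_def
    by (intro sum.cong refl sum.mono_neutral_left assms(3,4)) (auto simp: supp_def)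
  also have "\<dots> = (\<Sum>a\<in>A. \<Sum>b\<in>B. x a * y b * brb la mu a b g)"
    by (intro sum.mono_neutral_left assms(1,2)) (auto simp: supp_def)
  finally show ?thesis .
qed

lemma br_e_e [simp]: "br la mu (e a) (e b) = brb la mu a b"
  by (rule ext) (simp add: br_eq_sum_superset[of "{a}" _ "{b}"] vec_apply)

lemma br_vzero_left [simp]: "br la mu vzero y = vzero"
  by (rule ext) (simp add: br_def supp_def vec_apply)

lemma br_vzero_right [simp]: "br la mu x vzero = vzero"
  by (rule ext) (simp add: br_def supp_def vec_apply)

lemma br_vadd_left:
  assumes "x \<in> Vsp" "x' \<in> Vsp" "y \<in> Vsp"
  shows "br la mu (vadd x x') y = vadd (br la mu x y) (br la mu x' y)"
proof (rule ext)
  fix g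
  let ?A = "supp x \<union> supp x'"
  have "finite ?A" "finite (supp y)" "supp (vadd x x') \<subseteq> ?A"
    using assms supp_vadd by (auto simp: Vsp_def)
  then show "br la mu (vadd x x') y g = vadd (br la mu x y) (br la mu x' y) g"
    by (simp add: br_eq_sum_superset[where A = ?A and B = "supp y"] vec_apply algebra_simps sum.distrib)
qed

lemma br_vadd_right:
  assumes "x \<in> Vsp" "y \<in> Vsp" "y' \<in> Vsp"
  shows "br la mu x (vadd y y') = vadd (br la mu x y) (br la mu x y')"
proof (rule ext)
  fix g
  let ?B = "supp y \<union> supp y'"
  have "finite (supp x)" "finite ?B" "supp (vadd y y') \<subseteq> ?B"
    using assms supp_vadd by (auto simp: Vsp_def)
  then show "br la mu x (vadd y y') g = vadd (br la mu x y) (br la mu x y') g"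
    by (simp add: br_eq_sum_superset[where A = "supp x" and B = ?B] vec_apply algebra_simps sum.distrib)
qed

lemma br_vsmul_left:
  assumes "x \<in> Vsp" "y \<in> Vsp"
  shows "br la mu (vsmul c x) y = vsmul c (br la mu x y)"
proof (rule ext)
  fix g
  have "finite (supp x)" "finite (supp y)" "supp (vsmul c x) \<subseteq> supp x"
    using assms supp_vsmul by (auto simp: Vsp_def)
  then show "br la mu (vsmul c x) y g = vsmul c (br la mu x y) g"
    by (simp add: br_eq_sum_superset[where A = "supp x" and B = "supp y"] vec_apply algebra_simps sum_distrib_left)
qed

lemma br_vsmul_right:
  assumes "x \<in> Vsp" "y \<in> Vsp"
  shows "br la mu x (vsmul c y) = vsmul c (br la mu x y)"
proof (rule ext)
  fix g
  have "finite (supp x)" "finite (supp y)" "supp (vsmul c y) \<subseteq> supp y"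
    using assms supp_vsmul by (auto simp: Vsp_def)
  then show "br la mu x (vsmul c y) g = vsmul c (br la mu x y) g"
    by (simp add: br_eq_sum_superset[where A = "supp x" and B = "supp y"] vec_apply algebra_simps sum_distrib_left)
qed

lemma br_vsum_vsmul:
  assumes "finite X" "finite Y" "\<And>a. F a \<in> Vsp" "\<And>b. G b \<in> Vsp"
  shows "br la mu (vsum (\<lambda>a. vsmul (x a) (F a)) X) (vsum (\<lambda>b. vsmul (y b) (G b)) Y)
       = vsum (\<lambda>a. vsmul (x a) (vsum (\<lambda>b. vsmul (y b) (br la mu (F a) (G b))) Y)) X"
  using assms(1)
proof (induction X rule: finite_induct)
  case (insert a X)
  have "br la mu (F a) (vsum (\<lambda>b. vsmul (y b) (G b)) Y)
      = vsum (\<lambda>b. vsmul (y b) (br la mu (F a) (G b))) Y"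
    using assms(2) by (induction Y rule: finite_induct)
      (simp_all add: assms(3,4) br_vadd_right br_vsmul_right)
  with insert show ?case
    by (simp add: assms br_vadd_left br_vsmul_left)
qed simp

lemma is_linear_Vsp: "is_linear \<phi> \<Longrightarrow> x \<in> Vsp \<Longrightarrow> \<phi> x \<in> Vsp"
  by (simp add: is_linear_def)

lemma is_linear_vadd: "is_linear \<phi> \<Longrightarrow> x \<in> Vsp \<Longrightarrow> y \<in> Vsp \<Longrightarrow> \<phi> (vadd x y) = vadd (\<phi> x) (\<phi> y)"
  by (simp add: is_linear_def)

lemma is_linear_vsmul: "is_linear \<phi> \<Longrightarrow> x \<in> Vsp \<Longrightarrow> \<phi> (vsmul c x) = vsmul c (\<phi> x)"
  by (simp add: is_linear_def)

lemma is_linear_vzero: "is_linear \<phi> \<Longrightarrow> \<phi> vzero = vzero"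
  using is_linear_vsmul[of \<phi> vzero 0] by (simp add: Vsp_def supp_def vsmul_def vzero_def)

lemma is_linear_vsum_vsmul:
  assumes "is_linear \<phi>" "finite X" "\<And>a. F a \<in> Vsp"
  shows "\<phi> (vsum (\<lambda>a. vsmul (x a) (F a)) X) = vsum (\<lambda>a. vsmul (x a) (\<phi> (F a))) X"
  using assms(2)
  by (induction X rule: finite_induct)
    (simp_all add: assms(1,3) is_linear_vzero is_linear_vadd is_linear_vsmul)

lemma is_linear_eq_vsum_basis:
  assumes "is_linear \<phi>" "v \<in> Vsp"
  shows "\<phi> v = vsum (\<lambda>g. vsmul (v g) (\<phi> (e g))) (supp v)"
  using is_linear_vsum_vsmul[OF assms(1) finite_supp[OF assms(2)], where F = e and x = v]
  by (simp flip: vsum_basis[OF assms(2)])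

lemma is_linear_eq_vzero_if_basis:
  assumes "is_linear \<phi>" "\<And>g. \<phi> (e g) = vzero" "v \<in> Vsp"
  shows "\<phi> v = vzero"
  by (rule ext) (simp add: is_linear_eq_vsum_basis[OF assms(1,3)] assms(2) vec_apply vsum_apply)

section \<open>Half-derivations of fixed degree\<close>

lemma is_half_der_iff_basis:
  assumes lin: "is_linear \<phi>"
  shows "is_half_der la mu \<phi> \<longleftrightarrow> (\<forall>a b. \<phi> (brb la mu a b)
           = vsmul (1/2) (vadd (br la mu (\<phi> (e a)) (e b)) (br la mu (e a) (\<phi> (e b)))))"
proof
  assume "is_half_der la mu \<phi>"
  then show "\<forall>a b. \<phi> (brb la mu a b)
      = vsmul (1/2) (vadd (br la mu (\<phi> (e a)) (e b)) (br la mu (e a) (\<phi> (e b))))"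
    unfolding is_half_der_def by (metis br_e_e e_in_Vsp)
next
  assume basis: "\<forall>a b. \<phi> (brb la mu a b)
      = vsmul (1/2) (vadd (br la mu (\<phi> (e a)) (e b)) (br la mu (e a) (\<phi> (e b))))"
  have \<phi>e: "\<phi> (e a) \<in> Vsp" for a
    using is_linear_Vsp[OF lin e_in_Vsp] .
  have "\<phi> (br la mu x y) = vsmul (1/2) (vadd (br la mu (\<phi> x) y) (br la mu x (\<phi> y)))"
    if x: "x \<in> Vsp" and y: "y \<in> Vsp" for x y
  proof -
    let ?X = "supp x" and ?Y = "supp y"
    have fin: "finite ?X" "finite ?Y"
      using x y by (simp_all add: finite_supp)
    have "br la mu x y
        = vsum (\<lambda>a. vsmul (x a) (vsum (\<lambda>b. vsmul (y b) (brb la mu a b)) ?Y)) ?X"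
      using br_vsum_vsmul[OF fin, of e e la mu x y]
      by (simp flip: vsum_basis[OF x] vsum_basis[OF y])
    then have "\<phi> (br la mu x y)
        = vsum (\<lambda>a. vsmul (x a) (vsum (\<lambda>b. vsmul (y b) (\<phi> (brb la mu a b))) ?Y)) ?X"
      by (simp add: fin is_linear_vsum_vsmul[OF lin])
    moreover have "br la mu (\<phi> x) y
        = vsum (\<lambda>a. vsmul (x a) (vsum (\<lambda>b. vsmul (y b) (br la mu (\<phi> (e a)) (e b))) ?Y)) ?X"
      by (subst is_linear_eq_vsum_basis[OF lin x], subst vsum_basis[OF y])
        (simp add: br_vsum_vsmul fin \<phi>e)
    moreover have "br la mu x (\<phi> y)
        = vsum (\<lambda>a. vsmul (x a) (vsum (\<lambda>b. vsmul (y b) (br la mu (e a) (\<phi> (e b)))) ?Y)) ?X"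
      by (subst is_linear_eq_vsum_basis[OF lin y], subst vsum_basis[OF x])
        (simp add: br_vsum_vsmul fin \<phi>e)
    ultimately show ?thesis
      by (intro ext) (simp add: basis vec_apply vsum_apply sum_distrib_left sum.distrib algebra_simps)
  qed
  with lin show "is_half_der la mu \<phi>"
    by (simp add: is_half_der_def)
qed

lemma e_in_Wc: "e g \<in> Wc (gdeg g)"
  by (simp add: Wc_def)

lemma Wc_vsmul: "x \<in> Wc k \<Longrightarrow> vsmul c x \<in> Wc k"
  using supp_vsmul by (auto simp: Wc_def)

lemma vzero_in_Wc [simp]: "vzero \<in> Wc k"
  by (simp add: Wc_def supp_def vzero_apply)

lemma vsmul_e_in_Wc: "k = gdeg g \<Longrightarrow> vsmul c (e g) \<in> Wc k"
  using Wc_vsmul e_in_Wc by blast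

lemma Wc_vsum:
  assumes "finite S" "\<And>s. s \<in> S \<Longrightarrow> f s \<in> Wc k"
  shows "vsum f S \<in> Wc k"
proof -
  have "gdeg g = k" if "g \<in> supp (vsum f S)" for g
  proof -
    from that obtain s where "s \<in> S" "f s g \<noteq> 0"
      by (auto simp: supp_def vsum_apply intro: sum.neutral)
    with assms(2) show ?thesis
      by (auto simp: Wc_def supp_def)
  qed
  moreover have "vsum f S \<in> Vsp"
    using assms by (auto simp: Wc_def)
  ultimately show ?thesis
    by (simp add: Wc_def)
qed

lemma Wc_coeff_eq_0: "v \<in> Wc k \<Longrightarrow> gdeg h \<noteq> k \<Longrightarrow> v h = 0"
  by (auto simp: Wc_def supp_def)

lemma has_deg2_iff_basis:
  assumes lin: "is_linear \<phi>"
  shows "has_deg2 d \<phi> \<longleftrightarrow> (\<forall>g. \<phi> (e g) \<in> Wc (gdeg g + d))"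
proof
  assume "has_deg2 d \<phi>"
  then show "\<forall>g. \<phi> (e g) \<in> Wc (gdeg g + d)"
    using e_in_Wc by (auto simp: has_deg2_def)
next
  assume basis: "\<forall>g. \<phi> (e g) \<in> Wc (gdeg g + d)"
  have "\<phi> v \<in> Wc (k + d)" if v: "v \<in> Wc k" for k v
  proof -
    from v have "v \<in> Vsp" and deg: "\<And>g. g \<in> supp v \<Longrightarrow> gdeg g = k"
      by (auto simp: Wc_def)
    then show ?thesis
      unfolding is_linear_eq_vsum_basis[OF lin \<open>v \<in> Vsp\<close>]
      by (intro Wc_vsum Wc_vsmul) (simp_all add: finite_supp, metis basis deg)
  qed
  then show "has_deg2 d \<phi>"
    by (simp add: has_deg2_def)
qed

lemma Delta2_iff_basis:
  assumes "is_linear \<phi>"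
  shows "\<phi> \<in> Delta2 la mu d \<longleftrightarrow>
    (\<forall>a b. \<phi> (brb la mu a b)
       = vsmul (1/2) (vadd (br la mu (\<phi> (e a)) (e b)) (br la mu (e a) (\<phi> (e b)))))
    \<and> (\<forall>g. \<phi> (e g) \<in> Wc (gdeg g + d))"
  by (simp add: Delta2_def is_half_der_iff_basis[OF assms] has_deg2_iff_basis[OF assms])

definition is_Y_shift :: "int \<Rightarrow> complex \<Rightarrow> (vec \<Rightarrow> vec) \<Rightarrow> bool" where
  "is_Y_shift j \<alpha> \<phi> \<longleftrightarrow>
     (\<forall>n. \<phi> (e (GL n)) = vsmul \<alpha> (e (GY (n + j)))
        \<and> \<phi> (e (GY n)) = vsmul \<alpha> (e (GM (n + j + 1)))
        \<and> \<phi> (e (GM n)) = vzero)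
     \<and> \<phi> (e GC) = vzero"

lemma is_Y_shift_0_basis: "is_Y_shift j 0 \<phi> \<Longrightarrow> \<phi> (e g) = vzero"
  by (cases g) (auto simp: is_Y_shift_def vsmul_def vzero_def)

lemma is_Y_shift_in_Delta2:
  assumes lin: "is_linear \<phi>" and shift: "is_Y_shift j \<alpha> \<phi>"
  shows "\<phi> \<in> Delta2 1 mu (2 * j + 1)"
proof -
  have "\<phi> (brb 1 mu x y) = vsmul (1/2) (vadd (br 1 mu (\<phi> (e x)) (e y)) (br 1 mu (e x) (\<phi> (e y))))"
    for x y
    using shift
    by (cases x; cases y; intro ext)
      (simp_all add: is_Y_shift_def vec_apply is_linear_vadd[OF lin] is_linear_vsmul[OF lin]
        is_linear_vzero[OF lin] br_vsmul_left br_vsmul_right br_vadd_left algebra_simps)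
  moreover have "\<phi> (e g) \<in> Wc (gdeg g + (2 * j + 1))" for g
    using shift by (cases g) (auto simp: is_Y_shift_def intro!: vsmul_e_in_Wc)
  ultimately show ?thesis
    by (simp add: Delta2_iff_basis[OF lin])
qed

section \<open>Coefficients of a half-derivation of degree j + 1/2\<close>

locale odd_half_der =
  fixes la mu :: complex and j :: int and \<phi> :: "vec \<Rightarrow> vec"
  assumes in_Delta2: "\<phi> \<in> Delta2 la mu (2 * j + 1)"
begin

lemma linear: "is_linear \<phi>"
  using in_Delta2 by (simp add: Delta2_def is_half_der_def)

lemma basis_rule:
  "2 * \<phi> (brb la mu x y) h = br la mu (\<phi> (e x)) (e y) h + br la mu (e x) (\<phi> (e y)) h"
  using in_Delta2 by (simp add: Delta2_iff_basis[OF linear] vec_apply)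

lemma coeff_eq_0: "gdeg h \<noteq> gdeg g + (2 * j + 1) \<Longrightarrow> \<phi> (e g) h = 0"
  using in_Delta2 by (auto simp: Delta2_iff_basis[OF linear] intro: Wc_coeff_eq_0)

definition "a n = \<phi> (e (GL n)) (GY (n + j))"
definition "b n = \<phi> (e (GM n)) (GY (n + j))"
definition "\<gamma> = \<phi> (e GC) (GY j)"
definition "c n = \<phi> (e (GY n)) (GL (n + j + 1))"
definition "d n = \<phi> (e (GY n)) (GM (n + j + 1))"
definition "f n = \<phi> (e (GY n)) GC"

lemma image_GL: "\<phi> (e (GL n)) = vsmul (a n) (e (GY (n + j)))"
proof (rule ext)
  fix h
  show "\<phi> (e (GL n)) h = vsmul (a n) (e (GY (n + j))) h"
    by (cases h; simp add: vec_apply a_def; intro impI coeff_eq_0; simp; presburger)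
qed

lemma image_GM: "\<phi> (e (GM n)) = vsmul (b n) (e (GY (n + j)))"
proof (rule ext)
  fix h
  show "\<phi> (e (GM n)) h = vsmul (b n) (e (GY (n + j))) h"
    by (cases h; simp add: vec_apply b_def; intro impI coeff_eq_0; simp; presburger)
qed

lemma image_GC: "\<phi> (e GC) = vsmul \<gamma> (e (GY j))"
proof (rule ext)
  fix h
  show "\<phi> (e GC) h = vsmul \<gamma> (e (GY j)) h"
    by (cases h; simp add: vec_apply \<gamma>_def; intro impI coeff_eq_0; simp; presburger)
qed

lemma image_GY:
  "\<phi> (e (GY n)) = vadd (vsmul (c n) (e (GL (n + j + 1))))
     (vadd (vsmul (d n) (e (GM (n + j + 1)))) (vsmul (f n) (e GC)))"
proof (rule ext)
  fix h
  show "\<phi> (e (GY n)) h = vadd (vsmul (c n) (e (GL (n + j + 1))))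
     (vadd (vsmul (d n) (e (GM (n + j + 1)))) (vsmul (f n) (e GC))) h"
    by (cases h; simp add: vec_apply c_def d_def f_def; intro impI coeff_eq_0; simp; presburger)
qed

lemmas image_simps = image_GL image_GM image_GC image_GY vadd_apply vsmul_apply vzero_apply
  is_linear_vadd[OF linear] is_linear_vsmul[OF linear] is_linear_vzero[OF linear]
  br_vadd_left br_vadd_right br_vsmul_left br_vsmul_right

text \<open>\<open>XY_at_Z\<close> is the half-derivation identity on the pair \<open>(X_m, Y_n)\<close>, read off at the
  \<open>Z\<close>-coordinate.\<close>

lemma LY_at_L:
  "2 * (of_int n + 1/2 - (la + 1)/2 * of_int m + mu) * c (m + n) = c n * of_int (n + j + 1 - m)"
  using basis_rule[of "GL m" "GY n" "GL (m + n + j + 1)"]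
  by (simp add: image_simps) (simp add: e_apply algebra_simps)

lemma LY_at_M:
  "2 * (of_int n + 1/2 - (la + 1)/2 * of_int m + mu) * d (m + n)
     = a m * of_int (n - m - j) + d n * (of_int (n + j + 1) - la * of_int m + 2 * mu)"
  using basis_rule[of "GL m" "GY n" "GM (m + n + j + 1)"]
  by (simp add: image_simps) (simp add: e_apply algebra_simps)

lemma MY_at_M: "b m * of_int (n - m - j) = c n * (of_int m - la * of_int (n + j + 1) + 2 * mu)"
  using basis_rule[of "GM m" "GY n" "GM (m + n + j + 1)"]
  by (simp add: image_simps) (simp add: e_apply algebra_simps)

lemma CY_at_M: "\<gamma> * of_int (n - j) = 0"
  using basis_rule[of GC "GY n" "GM (n + j + 1)"]
  by (simp add: image_simps e_apply)

lemma LL_at_Y: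
  assumes "m + n \<noteq> 0"
  shows "2 * of_int (n - m) * a (m + n)
    = a n * (of_int (n + j) + 1/2 - (la + 1)/2 * of_int m + mu)
      - a m * (of_int (m + j) + 1/2 - (la + 1)/2 * of_int n + mu)"
  using basis_rule[of "GL m" "GL n" "GY (m + n + j)"] assms
  by (simp add: image_simps) (simp add: e_apply algebra_simps)

lemma \<gamma>_eq_0: "\<gamma> = 0"
  using CY_at_M[of "j + 1"] by simp

lemma c_eq_0: "c n = 0"
proof (rule ccontr)
  assume cn: "c n \<noteq> 0"
  have L0: "c k * (of_int k + 2 * mu - of_int j) = 0" for k
    using LY_at_L[where m = 0 and n = k] by (simp add: algebra_simps)
  from L0[of n] cn have "of_int n + 2 * mu - of_int j = 0"
    by simp
  then have mu: "2 * mu = of_int (j - n)"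
    by (simp add: algebra_simps eq_diff_eq)
  from L0[of "n + 1"] L0[of "n + 2"] have "c (1 + n) = 0" "c (2 + n) = 0"
    by (simp_all add: mu add.commute)
  with LY_at_L[where m = 1 and n = n] LY_at_L[where m = 2 and n = n] cn
  have "(of_int (n + j) :: complex) = 0" "(of_int (n + j - 1) :: complex) = 0"
    by simp_all
  then show False
    by simp
qed

lemma b_eq_0: "b m = 0"
  using MY_at_M[where m = m and n = "m + j + 1"] by (simp add: c_eq_0)

lemma LY_at_C: "(of_int n + 1/2 - (la + 1)/2 * of_int m + mu) * f (m + n) = 0"
  using basis_rule[of "GL m" "GY n" GC]
  by (simp add: image_simps c_eq_0) (simp add: e_apply)

lemma f_eq_0:
  assumes "\<not> (la = -3 \<and> (\<exists>k::int. mu = of_int k + 1/2))"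
  shows "f n = 0"
proof (rule ccontr)
  assume fn: "f n \<noteq> 0"
  from LY_at_C[where m = 0 and n = n] LY_at_C[where m = 1 and n = "n - 1"] fn
  have A: "of_int n + 1/2 + mu = 0" and B: "of_int (n - 1) + 1/2 - (la + 1)/2 + mu = 0"
    by simp_all
  have "la + 3 = 2 * ((of_int n + 1/2 + mu) - (of_int (n - 1) + 1/2 - (la + 1)/2 + mu))"
    by (simp add: field_simps)
  then have "la = -3"
    unfolding A B by (simp add: add_eq_0_iff2)
  moreover have "mu = of_int (- n - 1) + 1/2"
  proof -
    have "mu = (of_int n + 1/2 + mu) + of_int (- n - 1) + 1/2"
      by simp
    then show ?thesis
      unfolding A by simp
  qed
  ultimately show False
    using assms by blast
qed

lemma d_eq_a0_if_ne: "n \<noteq> j \<Longrightarrow> d n = a 0"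
proof -
  have "(d n - a 0) * of_int (n - j) = 0"
    using LY_at_M[where m = 0 and n = n] by (simp add: algebra_simps)
  then show "n \<noteq> j \<Longrightarrow> d n = a 0"
    by simp
qed

lemma a_eq_a0: "a m = a 0"
proof -
  define N where "N = 2 * \<bar>m\<bar> + 2 * \<bar>j\<bar> + 1"
  have N: "N \<noteq> j" "m + N \<noteq> j" "N - m - j \<noteq> 0"
    unfolding N_def by auto
  have "(a m - a 0) * of_int (N - m - j) = 0"
    using LY_at_M[where m = m and n = N] d_eq_a0_if_ne[OF N(1)] d_eq_a0_if_ne[OF N(2)]
    by (simp add: add.commute) algebra
  moreover have "(of_int (N - m - j) :: complex) \<noteq> 0"
    using N(3) of_int_eq_0_iff by blast
  ultimately show ?thesis
    by (metis mult_eq_0_iff eq_iff_diff_eq_0)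
qed

lemma d_eq_a0: "d n = a 0"
proof (cases "n = j")
  case True
  have "(d j - a 0) * (2 * of_int j + 1 - la + 2 * mu) = 0"
    using LY_at_M[where m = 1 and n = j] d_eq_a0_if_ne[of "1 + j"] a_eq_a0[of 1]
    by simp algebra
  moreover have "(d j - a 0) * (2 * of_int j - 2 - la + 2 * mu) = 0"
    using LY_at_M[where m = 1 and n = "j - 1"] d_eq_a0_if_ne[of "j - 1"] a_eq_a0[of 1]
    by simp algebra
  moreover have "2 * of_int j + 1 - la + 2 * mu \<noteq> 2 * of_int j - 2 - la + 2 * mu"
    by simp
  ultimately show ?thesis
    using True by (metis mult_eq_0_iff eq_iff_diff_eq_0)
qed (rule d_eq_a0_if_ne)

lemma a0_mult_eq_0: "a 0 * (1 - la) = 0"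
proof -
  have "4 * a 0 = a 0 * (2 * of_int j + 3 + 2 * mu) - a 0 * (2 * of_int j - la + 2 * mu)"
    using LL_at_Y[where m = 0 and n = 1] a_eq_a0[of 1] by (simp add: field_simps)
  then show ?thesis
    by algebra
qed

lemma is_Y_shift_a0:
  assumes "\<not> (la = -3 \<and> (\<exists>k::int. mu = of_int k + 1/2))"
  shows "is_Y_shift j (a 0) \<phi>"
  unfolding is_Y_shift_def
proof (intro allI conjI)
  fix n
  show "\<phi> (e (GL n)) = vsmul (a 0) (e (GY (n + j)))"
    using image_GL a_eq_a0 by metis
  show "\<phi> (e (GY n)) = vsmul (a 0) (e (GM (n + j + 1)))"
    by (intro ext) (simp add: image_GY c_eq_0 d_eq_a0 f_eq_0[OF assms] vec_apply)
  show "\<phi> (e (GM n)) = vzero"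
    by (intro ext) (simp add: image_GM b_eq_0 vec_apply)
next
  show "\<phi> (e GC) = vzero"
    by (intro ext) (simp add: image_GC \<gamma>_eq_0 vec_apply)
qed

end

lemma Delta2_odd_eq_vzero:
  assumes "\<phi> \<in> Delta2 la mu (2 * j + 1)" "la \<noteq> 1"
    and "\<not> (la = -3 \<and> (\<exists>k::int. mu = of_int k + 1/2))" "v \<in> Vsp"
  shows "\<phi> v = vzero"
proof -
  interpret odd_half_der la mu j \<phi>
    using assms(1) by unfold_locales
  have "a 0 = 0"
    using a0_mult_eq_0 assms(2) by simp
  then have "is_Y_shift j 0 \<phi>"
    using is_Y_shift_a0[OF assms(3)] by simp
  then show ?thesis
    using is_linear_eq_vzero_if_basis[OF linear _ assms(4)] is_Y_shift_0_basis by blast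
qed

lemma Delta2_odd_1_iff:
  assumes "is_linear \<phi>"
  shows "\<phi> \<in> Delta2 1 mu (2 * j + 1) \<longleftrightarrow> (\<exists>\<alpha>. is_Y_shift j \<alpha> \<phi>)"
proof
  assume "\<phi> \<in> Delta2 1 mu (2 * j + 1)"
  then interpret odd_half_der 1 mu j \<phi>
    by unfold_locales
  show "\<exists>\<alpha>. is_Y_shift j \<alpha> \<phi>"
    using is_Y_shift_a0 by auto
qed (use assms is_Y_shift_in_Delta2 in blast)

lemma not_half_odd_integer:
  fixes mu :: complex
  assumes "(\<nexists>k::int. 2 * mu = of_int k) \<or> (\<exists>k::int. mu = of_int k)"
  shows "\<nexists>k::int. mu = of_int k + 1/2"
proof
  assume "\<exists>k::int. mu = of_int k + 1/2"
  then obtain k :: int where "mu = of_int k + 1/2"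
    by blast
  then have two_mu: "2 * mu = of_int (2 * k + 1)"
    by (simp add: field_simps)
  moreover have "mu \<noteq> of_int k'" for k' :: int
  proof
    assume "mu = of_int k'"
    with two_mu have "(of_int (2 * k') :: complex) = of_int (2 * k + 1)"
      by simp
    then have "2 * k' = 2 * k + 1"
      by (simp only: of_int_eq_iff)
    then show False
      by presburger
  qed
  ultimately show False
    using assms by blast
qed

theorem mainTheorem6:
  fixes la mu :: complex and j :: int
  shows
   "((\<exists>k::int. mu = of_int k + 1/2) \<and> la \<notin> {-3, -1, 1} \<longrightarrow>
       (\<forall>\<phi>\<in>Delta2 la mu (2*j+1). \<forall>v\<in>Vsp. \<phi> v = vzero))
    \<and> ((\<not> (\<exists>k::int. 2 * mu = of_int k)) \<or> ((\<exists>k::int. mu = of_int k) \<and> la \<noteq> -1) \<longrightarrow>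
       (la \<noteq> 1 \<longrightarrow> (\<forall>\<phi>\<in>Delta2 la mu (2*j+1). \<forall>v\<in>Vsp. \<phi> v = vzero))
     \<and> (la = 1 \<longrightarrow> (\<forall>\<phi>. is_linear \<phi> \<longrightarrow>
          (\<phi> \<in> Delta2 1 mu (2*j+1) \<longleftrightarrow>
            (\<exists>\<alpha>::complex. (\<forall>n. \<phi> (e (GL n)) = vsmul \<alpha> (e (GY (n + j)))
                              \<and> \<phi> (e (GY n)) = vsmul \<alpha> (e (GM (n + j + 1)))
                              \<and> \<phi> (e (GM n)) = vzero)
                         \<and> \<phi> (e GC) = vzero)))))"
proof (intro conjI impI ballI allI)
  fix \<phi> v
  assume "(\<exists>k::int. mu = of_int k + 1/2) \<and> la \<notin> {-3, -1, 1}"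
    and "\<phi> \<in> Delta2 la mu (2*j+1)" "v \<in> Vsp"
  then show "\<phi> v = vzero"
    by (intro Delta2_odd_eq_vzero) auto
next
  fix \<phi> v
  assume "(\<not> (\<exists>k::int. 2 * mu = of_int k)) \<or> ((\<exists>k::int. mu = of_int k) \<and> la \<noteq> -1)"
    and "la \<noteq> 1" "\<phi> \<in> Delta2 la mu (2*j+1)" "v \<in> Vsp"
  then show "\<phi> v = vzero"
    using not_half_odd_integer by (intro Delta2_odd_eq_vzero) auto
qed (simp add: Delta2_odd_1_iff is_Y_shift_def)

end
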